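(* With $h(x;t)=\dfrac{1-x-xt-\sqrt{(1-x-xt)^2-4x^2t}}{2xt}=\sum_{0\le m<n}N_{n,m+1}x^nt^m$, one has $$f(x;1,v,w)=\frac{x(1-v)\big[(1-x)^2-wx^2\big]-v^2wx(1-x)\,h(x;vw)}{(1-x)\Big((1-v)\big[(1-x)^2-wx^2\big]-vwx\Big)}.$$ In particular $f(x;1,1,w)=h(x;w)$, i.e. the number of $021$-avoiding ascent sequences of length $n$ with exactly $m$ ascents is $N_{n,m+1}$.
   Context: An ascent sequence of length $n$ is a sequence $x_1\cdots x_n$ of non-negative integers with $x_1=0$ and $x_i\le \mathrm{asc}(x_1\cdots x_{i-1})+1$ for $1<i\le n$, where $\mathrm{asc}$ counts ascents (indices $j$ with $x_j<x_{j+1}$). It avoids $021$ if there are no $i<j<k$ with $x_i<x_k<x_j$. Let $f(x;1,v,w)=\sum_{\pi}x^{|\pi|}v^{\max(\pi)}w^{\mathrm{asc}(\pi)}$, summed over all $021$-avoiding ascent sequences $\pi$ of length $|\pi|\ge1$, where $\max(\pi)$ is the largest letter of $\pi$. $N_{n,m}=\frac1n\binom nm\binom n{m-1}$ is the Narayana number. *)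

theory Defs
  imports Complex_Main "HOL-Computational_Algebra.Formal_Power_Series"
begin

definition asc :: "nat list \<Rightarrow> nat" where
  "asc xs = card {j. Suc j < length xs \<and> xs ! j < xs ! Suc j}"

definition ascent_seq :: "nat list \<Rightarrow> bool" where
  "ascent_seq xs \<longleftrightarrow> xs \<noteq> [] \<and> xs ! 0 = 0 \<and>
     (\<forall>i. 0 < i \<and> i < length xs \<longrightarrow> xs ! i \<le> asc (take i xs) + 1)"

definition avoids021 :: "nat list \<Rightarrow> bool" where
  "avoids021 xs \<longleftrightarrow> \<not> (\<exists>i j k. i < j \<and> j < k \<and> k < length xs \<and>
       xs ! i < xs ! k \<and> xs ! k < xs ! j)"

definition AS021 :: "nat \<Rightarrow> nat list set" where
  "AS021 n = {xs. length xs = n \<and> ascent_seq xs \<and> avoids021 xs}"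

(* f(x;1,v,w) as a formal power series in x, for real values of v and w *)
definition fgen :: "real \<Rightarrow> real \<Rightarrow> real fps" where
  "fgen v w = Abs_fps (\<lambda>n. \<Sum>p\<in>AS021 n. v ^ Max (set p) * w ^ asc p)"

(* Narayana number N_{n,m} = (1/n) C(n,m) C(n,m-1), used for m \<ge> 1 *)
definition narayana :: "nat \<Rightarrow> nat \<Rightarrow> real" where
  "narayana n m = real (n choose m) * real (n choose (m - 1)) / real n"

definition hgen :: "real \<Rightarrow> real fps" where
  "hgen t = Abs_fps (\<lambda>n. \<Sum>m<n. narayana n (m + 1) * t ^ m)"

definition numer :: "real \<Rightarrow> real \<Rightarrow> real fps" where
  "numer v w = fps_X * fps_const (1 - v) * ((1 - fps_X)^2 - fps_const w * fps_X^2)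
     - fps_const (v^2 * w) * fps_X * (1 - fps_X) * hgen (v * w)"

definition denom :: "real \<Rightarrow> real \<Rightarrow> real fps" where
  "denom v w = (1 - fps_X) * (fps_const (1 - v) * ((1 - fps_X)^2 - fps_const w * fps_X^2)
     - fps_const (v * w) * fps_X)"

end

theory Submission
  imports Defs "HOL-Computational_Algebra.Polynomial"
begin

unbundle fps_syntax

text \<open>
  A 021-avoiding ascent sequence q can be extended by a letter y exactly when y = 0 or
  max q \<le> y \<le> asc q + 1. Hence what matters about q is whether it is constantly 0,
  ends with its (positive) maximum, or ends with 0, together with its slack asc q - max q.
  Writing Y = x/(1-x), h = h(x;vw) and q = wYh, the weighted sequences of slack s ending
  with the maximum are counted by T_s = vwYhq^s, those ending with 0 by YT_s: both sides
  satisfy the same recurrence in the length, the one for T_s being a consequence of the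
  functional equation h = x(1+h)(1+th). Summing over s gives f = Y + (1+Y)T_0/(1-q), and the
  closed form follows by algebra. The functional equation itself comes from the three-term
  recurrence of the Narayana polynomials: it makes h satisfy a first-order linear ODE, and
  then x(1+h)(1+th) - h satisfies a linear ODE whose only power series solution is 0.
\<close>

section \<open>Narayana polynomials\<close>

lemma binomial_Suc_Suc_real:
  "(real k + 1) * real (Suc n choose Suc k) = (real n + 1) * real (n choose k)"
  using Suc_times_binomial[of k n] by (metis of_nat_Suc of_nat_mult add.commute)

lemma binomial_Suc_right_real:
  "(real k + 1) * real (n choose Suc k) = (real n - real k) * real (n choose k)"
proof (cases "k \<le> n")
  case True
  have "Suc k * (n choose Suc k) = (n - k) * (n choose k)"
    using binomial_absorption[of k n] binomial_absorb_comp[of n k] by simp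
  then show ?thesis using True by (metis of_nat_Suc of_nat_mult of_nat_diff add.commute)
next
  case False
  then show ?thesis by (simp add: binomial_eq_0)
qed

definition narayana_coeff :: "nat \<Rightarrow> nat \<Rightarrow> real" where
  "narayana_coeff n m = (if m < n then narayana n (m + 1) else 0)"

lemma narayana_coeff_Suc:
  "narayana_coeff (Suc n) m = real (Suc n choose m) * real (n choose m) / (real m + 1)"
proof (cases "m \<le> n")
  case True
  define p q where "p = real n + 1" and "q = real m + 1"
  have pq: "p \<noteq> 0" "q \<noteq> 0" unfolding p_def q_def by (simp_all add: add_nonneg_pos)
  have binom: "real (Suc n choose Suc m) = p * real (n choose m) / q"
    using binomial_Suc_Suc_real[of m n] pq unfolding p_def q_def
    by (simp add: eq_divide_eq algebra_simps del: binomial_Suc_Suc)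
  have "narayana_coeff (Suc n) m = real (Suc n choose Suc m) * real (Suc n choose m) / p"
    using True unfolding p_def by (simp add: narayana_coeff_def narayana_def del: binomial_Suc_Suc)
  then show ?thesis unfolding binom q_def[symmetric] using pq by (simp add: field_simps)
next
  case False
  then show ?thesis by (simp add: narayana_coeff_def binomial_eq_0)
qed

lemma narayana_coeff_recurrence:
  "real (n + 4) * narayana_coeff (n + 3) (m + 2) =
     real (2 * n + 5) * (narayana_coeff (n + 2) (m + 2) + narayana_coeff (n + 2) (m + 1))
     - real (n + 1) * (narayana_coeff (n + 1) (m + 2) - 2 * narayana_coeff (n + 1) (m + 1)
                       + narayana_coeff (n + 1) m)"
proof (cases "m \<le> n")
  case False
  then show ?thesis by (simp add: narayana_coeff_def)
next
  case True
  define x y where "x = real n" and "y = real m"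
  define a b e where "a = y + 1" and "b = y + 2" and "e = y + 3"
  define U V where "U = real (Suc n choose m)" and "V = real (n choose m)"
  (* Each coefficient is U V times a rational function of x and y, for a suitable choice
     among the two ways of writing C(n+1,m+1); the recurrence becomes a polynomial identity. *)
  note binomial_Suc_Suc[simp del]
  have b1: "real (Suc n choose Suc m) = (x + 1 - y) * U / a"
    using binomial_Suc_right_real[of m "Suc n"] unfolding x_def y_def a_def b_def U_def
    by (simp add: eq_divide_eq algebra_simps)
  have b2: "real (Suc n choose Suc m) = (x + 1) * V / a"
    using binomial_Suc_Suc_real[of m n] unfolding x_def y_def a_def b_def V_def
    by (simp add: eq_divide_eq algebra_simps)
  have b3: "real (Suc (Suc n) choose Suc m) = (x + 2) * U / a"
    using binomial_Suc_Suc_real[of m "Suc n"] unfolding x_def y_def a_def b_def U_def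
    by (simp add: eq_divide_eq algebra_simps)
  have b4: "real (n choose Suc m) = (x - y) * V / a"
    using binomial_Suc_right_real[of m n] unfolding x_def y_def a_def b_def V_def
    by (simp add: eq_divide_eq algebra_simps)
  have b5: "real (Suc (Suc (Suc n)) choose Suc (Suc m)) = (x + 3) * real (Suc (Suc n) choose Suc m) / b"
    using binomial_Suc_Suc_real[of "Suc m" "Suc (Suc n)"] unfolding x_def y_def a_def b_def
    by (simp add: eq_divide_eq algebra_simps)
  have b6: "real (Suc (Suc n) choose Suc (Suc m)) = (x + 2) * real (Suc n choose Suc m) / b"
    using binomial_Suc_Suc_real[of "Suc m" "Suc n"] unfolding x_def y_def a_def b_def
    by (simp add: eq_divide_eq algebra_simps)
  have b7: "real (Suc n choose Suc (Suc m)) = (x + 1) * real (n choose Suc m) / b"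
    using binomial_Suc_Suc_real[of "Suc m" n] unfolding x_def y_def a_def b_def
    by (simp add: eq_divide_eq algebra_simps)
  have b8: "real (Suc n choose Suc (Suc m)) = (x - y) * real (Suc n choose Suc m) / b"
    using binomial_Suc_right_real[of "Suc m" "Suc n"] unfolding x_def y_def a_def b_def
    by (simp add: eq_divide_eq algebra_simps)
  have b9: "real (n choose Suc (Suc m)) = (x - y - 1) * real (n choose Suc m) / b"
    using binomial_Suc_right_real[of "Suc m" n] unfolding x_def y_def a_def b_def
    by (simp add: eq_divide_eq algebra_simps)
  have idx: "n + 3 = Suc (Suc (Suc n))" "n + 2 = Suc (Suc n)" "n + 1 = Suc n"
    "m + 2 = Suc (Suc m)" "m + 1 = Suc m" by simp_all
  have r: "real (Suc (Suc m)) + 1 = e" "real (Suc m) + 1 = b" "real m + 1 = a"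
    "real (n + 4) = x + 4" "real (2 * n + 5) = 2 * x + 5" "real (n + 1) = x + 1"
    unfolding x_def y_def a_def b_def e_def by simp_all
  have pos: "a \<noteq> 0" "b \<noteq> 0" "e \<noteq> 0"
    unfolding y_def a_def b_def e_def by (simp_all add: add_nonneg_pos)
  define c where "c = U * V / (a^2 * b^2 * e)"
  have c1: "narayana_coeff (n + 3) (m + 2) = c * ((x+3) * (x+2)^2 * (x+1))"
    unfolding idx narayana_coeff_Suc b5 b6 b3 b2 r c_def using pos
    by (simp add: field_simps power2_eq_square)
  have c2: "narayana_coeff (n + 2) (m + 2) = c * ((x+2) * (x+1-y) * (x+1) * (x-y))"
    unfolding idx narayana_coeff_Suc b6 b7 b1 b4 r c_def using pos
    by (simp add: field_simps power2_eq_square)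
  have c3: "narayana_coeff (n + 2) (m + 1) = c * ((x+2) * (x+1) * b * e)"
    unfolding idx narayana_coeff_Suc b3 b2 r c_def using pos
    by (simp add: field_simps power2_eq_square)
  have c4: "narayana_coeff (n + 1) (m + 2) = c * ((x-y)^2 * (x+1-y) * (x-y-1))"
    unfolding idx narayana_coeff_Suc b8 b9 b1 b4 r c_def using pos
    by (simp add: field_simps power2_eq_square)
  have c5: "narayana_coeff (n + 1) (m + 1) = c * ((x+1-y) * (x-y) * b * e)"
    unfolding idx narayana_coeff_Suc b1 b4 r c_def using pos
    by (simp add: field_simps power2_eq_square)
  have c6: "narayana_coeff (n + 1) m = c * (a * b^2 * e)"
    unfolding idx narayana_coeff_Suc r c_def U_def[symmetric] V_def[symmetric] using pos
    by (simp add: field_simps power2_eq_square)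
  show ?thesis
    unfolding c1 c2 c3 c4 c5 c6 r unfolding a_def b_def e_def by (simp add: algebra_simps power2_eq_square)
qed

lemma hgen_nth: "hgen t $ n = (\<Sum>m<n. narayana_coeff n m * t ^ m)"
  unfolding hgen_def narayana_coeff_def by (auto intro!: sum.cong)

lemma narayana_coeff_eq_0: "n \<le> m \<Longrightarrow> narayana_coeff n m = 0"
  by (simp add: narayana_coeff_def)

lemma narayana_coeff_0: "n \<ge> 1 \<Longrightarrow> narayana_coeff n 0 = 1"
  by (cases n) (simp_all add: narayana_coeff_Suc)

lemma narayana_coeff_1: "narayana_coeff n 1 = real n * (real n - 1) / 2"
  by (cases n) (simp_all add: narayana_coeff_Suc narayana_coeff_eq_0 algebra_simps)

definition narayana_poly :: "nat \<Rightarrow> real poly" where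
  "narayana_poly n = (\<Sum>m<n. monom (narayana_coeff n m) m)"

lemma coeff_narayana_poly: "coeff (narayana_poly n) m = narayana_coeff n m"
  unfolding narayana_poly_def coeff_sum coeff_monom
  by (simp add: sum.delta' narayana_coeff_eq_0 not_less)

lemma poly_narayana_poly: "poly (narayana_poly n) t = hgen t $ n"
  unfolding narayana_poly_def hgen_nth by (simp add: poly_sum poly_monom)

lemma narayana_poly_recurrence:
  "smult (real (n + 4)) (narayana_poly (n + 3)) =
     smult (real (2 * n + 5)) ([:1, 1:] * narayana_poly (n + 2))
     - smult (real (n + 1)) ([:1, -1:]^2 * narayana_poly (n + 1))"
proof (rule poly_eqI)
  fix k
  have shift: "[:1, 1:] * p = p + pCons 0 p"
    "[:1, -1:]^2 * p = p - smult 2 (pCons 0 p) + pCons 0 (pCons 0 p)"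
    for p :: "real poly"
    by (simp_all add: power2_eq_square algebra_simps)
  consider "k = 0" | "k = 1" | m where "k = Suc (Suc m)"
    by (metis One_nat_def not0_implies_Suc)
  then show "coeff (smult (real (n + 4)) (narayana_poly (n + 3))) k =
     coeff (smult (real (2 * n + 5)) ([:1, 1:] * narayana_poly (n + 2))
     - smult (real (n + 1)) ([:1, -1:]^2 * narayana_poly (n + 1))) k"
  proof cases
    case 1
    then show ?thesis
      unfolding shift by (simp add: coeff_narayana_poly narayana_coeff_0)
  next
    case 2
    then show ?thesis
      unfolding shift
      by (simp add: coeff_narayana_poly narayana_coeff_0 narayana_coeff_1[unfolded One_nat_def] field_simps)
  next
    case 3
    have idx: "m + 2 = Suc (Suc m)" "m + 1 = Suc m" by simp_all
    show ?thesis
      using 3 narayana_coeff_recurrence[of n m, unfolded idx]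
      unfolding shift by (simp add: coeff_narayana_poly algebra_simps)
  qed
qed

lemma hgen_nth_recurrence:
  "real (n + 4) * hgen t $ (n + 3) =
     real (2 * n + 5) * (1 + t) * hgen t $ (n + 2) - real (n + 1) * (1 - t)^2 * hgen t $ (n + 1)"
  using arg_cong[OF narayana_poly_recurrence[of n], of "\<lambda>p. poly p t"]
  by (simp add: poly_narayana_poly algebra_simps)

section \<open>The functional equation of h\<close>

text \<open>The n-th coefficient of the equation expresses (n+1) Q$n through Q$0, ..., Q$(n-1).\<close>

lemma fps_eq_0_of_ode:
  fixes Q A B :: "'a :: field_char_0 fps"
  assumes ode: "Q + fps_X * fps_deriv Q = fps_X^2 * (A * Q + B * fps_deriv Q)"
  shows "Q = 0"
proof -
  have "Q $ n = 0" for n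
  proof (induction n rule: less_induct)
    case (less n)
    have rhs: "(fps_X^2 * (A * Q + B * fps_deriv Q)) $ n = 0"
    proof (cases "n < 2")
      case False
      have "(A * Q) $ (n - 2) = 0" "(B * fps_deriv Q) $ (n - 2) = 0"
        using False less.IH by (auto simp: fps_mult_nth intro!: sum.neutral)
      then show ?thesis by (simp add: fps_X_power_mult_nth)
    qed (simp add: fps_X_power_mult_nth)
    have "of_nat (Suc n) * Q $ n = (Q + fps_X * fps_deriv Q) $ n"
      by (cases n) (simp_all add: algebra_simps)
    also have "\<dots> = 0" using ode rhs by simp
    finally show ?case by (simp del: of_nat_Suc)
  qed
  then show ?thesis by (simp add: fps_ext)
qed

text \<open>The three-term recurrence for the coefficients, written as x \<Delta> h' = ((1+t)x - 1) h + 2x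
  with \<Delta> = (1-x-xt)^2 - 4x^2t the discriminant of the quadratic satisfied by h.\<close>

lemma hgen_ode:
  fixes t :: real
  defines "H \<equiv> hgen t"
  shows "H + fps_X * fps_deriv H =
    fps_X * (fps_const (1 + t) * H + 2)
    + fps_X^2 * (fps_const (2 * (1 + t)) * fps_deriv H - fps_const ((1 - t)^2) * fps_X * fps_deriv H)"
proof (rule fps_ext)
  fix n :: nat
  have low: "H $ 0 = 0" "H $ Suc 0 = 1" "H $ 2 = 1 + t"
    unfolding H_def hgen_nth by (simp_all add: narayana_coeff_Suc numeral_2_eq_2)
  have "n = 0 \<or> n = 1 \<or> n = 2 \<or> (\<exists>m. n = Suc (Suc (Suc m)))" by presburger
  then consider "n = 0" | "n = 1" | "n = 2" | m where "n = Suc (Suc (Suc m))" by blast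
  then show "(H + fps_X * fps_deriv H) $ n = (fps_X * (fps_const (1 + t) * H + 2)
    + fps_X^2 * (fps_const (2 * (1 + t)) * fps_deriv H - fps_const ((1 - t)^2) * fps_X * fps_deriv H)) $ n"
  proof cases
    case 1
    then show ?thesis using low by simp
  next
    case 2
    then show ?thesis using low by (simp add: fps_X_power_mult_nth)
  next
    case 3
    then show ?thesis by (simp add: fps_X_power_mult_nth fps_numeral_nth low numeral_2_eq_2[symmetric])
  next
    case 4
    have idx: "m + 3 = Suc (Suc (Suc m))" "m + 2 = Suc (Suc m)" "m + 1 = Suc m" by simp_all
    from 4 show ?thesis
      using hgen_nth_recurrence[of m t, unfolded idx] unfolding H_def
      by (simp add: fps_X_power_mult_nth fps_numeral_nth mult.assoc algebra_simps power2_eq_square)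
  qed
qed

lemma hgen_functional_eq:
  fixes t :: real
  defines "H \<equiv> hgen t"
  shows "H = fps_X * (1 + H) * (1 + fps_const t * H)"
proof -
  define Q where "Q = fps_X * (1 + H) * (1 + fps_const t * H) - H"
  have dQ: "fps_deriv Q = (1 + H) * (1 + fps_const t * H) + fps_X * fps_deriv H * (1 + fps_const t * H)
      + fps_X * (1 + H) * (fps_const t * fps_deriv H) - fps_deriv H"
    unfolding Q_def by (simp add: algebra_simps)
  have "Q + fps_X * fps_deriv Q = fps_X^2 * (fps_const ((1 - t)^2) * Q
      + (fps_const (2 * (1 + t)) - fps_const ((1 - t)^2) * fps_X) * fps_deriv Q)"
  proof -
    define c where "c = fps_const t"
    have const_eqs: "fps_const (1 + t) = 1 + c" "fps_const (2 * (1 + t)) = 2 + 2 * c"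
      "fps_const ((1 - t)^2) = (1 - c)^2"
      unfolding c_def by (simp_all add: fps_numeral_fps_const flip: fps_const_1_eq_1)
    show ?thesis
      using hgen_ode[of t] unfolding dQ unfolding Q_def H_def[symmetric] const_eqs c_def[symmetric]
      by algebra
  qed
  then have "Q = 0" by (rule fps_eq_0_of_ode)
  then show ?thesis unfolding Q_def by simp
qed

section \<open>Extending 021-avoiding ascent sequences\<close>

lemma asc_snoc:
  assumes "q \<noteq> []"
  shows "asc (q @ [y]) = asc q + (if last q < y then 1 else 0)"
proof -
  let ?S = "{j. Suc j < length q \<and> q ! j < q ! Suc j}"
  have "{j. Suc j < length (q @ [y]) \<and> (q @ [y]) ! j < (q @ [y]) ! Suc j}
      = ?S \<union> (if last q < y then {length q - 1} else {})" (is "?T = _")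
  proof (rule set_eqI)
    fix j
    consider "Suc j < length q" | "length q = Suc j" | "Suc j > length q" by linarith
    then show "j \<in> ?T \<longleftrightarrow> j \<in> ?S \<union> (if last q < y then {length q - 1} else {})"
      by cases (use assms in \<open>auto simp: nth_append last_conv_nth\<close>)
  qed
  moreover have "finite ?S" by (rule finite_subset[of _ "{..<length q}"]) auto
  moreover have "length q - 1 \<notin> ?S" using assms by auto
  ultimately show ?thesis unfolding asc_def by auto
qed

lemma asc_less_length: "xs \<noteq> [] \<Longrightarrow> asc xs < length xs"
proof -
  assume "xs \<noteq> []"
  have "{j. Suc j < length xs \<and> xs ! j < xs ! Suc j} \<subseteq> {..<length xs - 1}" by auto
  then have "asc xs \<le> length xs - 1" unfolding asc_def by (metis card_lessThan card_mono finite_lessThan)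
  then show ?thesis using \<open>xs \<noteq> []\<close> by (cases xs) auto
qed

lemma asc_eq_0_if_all_zero:
  assumes "\<And>x. x \<in> set xs \<Longrightarrow> x = 0"
  shows "asc xs = 0"
proof -
  have "xs ! Suc j = 0" if "Suc j < length xs" for j using assms that by simp
  then have "{j. Suc j < length xs \<and> xs ! j < xs ! Suc j} = {}" by fastforce
  then show ?thesis unfolding asc_def by (metis card.empty)
qed

lemma ascent_seq_snoc:
  assumes "q \<noteq> []"
  shows "ascent_seq (q @ [y]) \<longleftrightarrow> ascent_seq q \<and> y \<le> asc q + 1"
proof -
  have "(\<forall>i. 0 < i \<and> i < length (q @ [y]) \<longrightarrow> (q @ [y]) ! i \<le> asc (take i (q @ [y])) + 1)
      \<longleftrightarrow> (\<forall>i. 0 < i \<and> i < length q \<longrightarrow> q ! i \<le> asc (take i q) + 1) \<and> y \<le> asc q + 1"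
    using assms by (auto simp: nth_append less_Suc_eq)
  then show ?thesis using assms unfolding ascent_seq_def by (auto simp: nth_append)
qed

lemma avoids021_snoc:
  "avoids021 (q @ [y]) \<longleftrightarrow>
     avoids021 q \<and> \<not> (\<exists>i j. i < j \<and> j < length q \<and> q ! i < y \<and> y < q ! j)"
proof -
  let ?p = "q @ [y]"
  have "(\<exists>i j k. i < j \<and> j < k \<and> k < length ?p \<and> ?p ! i < ?p ! k \<and> ?p ! k < ?p ! j)
    \<longleftrightarrow> (\<exists>i j k. i < j \<and> j < k \<and> k < length q \<and> q ! i < q ! k \<and> q ! k < q ! j)
       \<or> (\<exists>i j. i < j \<and> j < length q \<and> q ! i < y \<and> y < q ! j)" (is "?L \<longleftrightarrow> ?A \<or> ?B")
  proof
    assume ?L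
    then obtain i j k where ijk: "i < j" "j < k" "k < length ?p" "?p ! i < ?p ! k" "?p ! k < ?p ! j"
      by blast
    show "?A \<or> ?B"
    proof (cases "k < length q")
      case True
      then have ?A using ijk by (auto simp: nth_append)
      then show ?thesis ..
    next
      case False
      then have "k = length q" using ijk by simp
      then have ?B using ijk by (auto simp: nth_append)
      then show ?thesis ..
    qed
  next
    assume "?A \<or> ?B"
    then show ?L
    proof
      assume ?A
      then obtain i j k where "i < j" "j < k" "k < length q" "q ! i < q ! k" "q ! k < q ! j" by blast
      then show ?L by (intro exI[of _ i] exI[of _ j] exI[of _ k]) (simp add: nth_append)
    next
      assume ?B
      then obtain i j where "i < j" "j < length q" "q ! i < y" "y < q ! j" by blast
      then show ?L by (intro exI[of _ i] exI[of _ j] exI[of _ "length q"]) (simp add: nth_append)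
    qed
  qed
  then show ?thesis unfolding avoids021_def by blast
qed

definition max_letter :: "nat list \<Rightarrow> nat" where
  "max_letter p = Max (set p)"

lemma max_letter_snoc: "q \<noteq> [] \<Longrightarrow> max_letter (q @ [y]) = max (max_letter q) y"
  unfolding max_letter_def by (simp add: max.commute)

lemma max_letter_ge: "x \<in> set q \<Longrightarrow> x \<le> max_letter q"
  unfolding max_letter_def by simp

lemma max_letter_le_iff: "q \<noteq> [] \<Longrightarrow> max_letter q \<le> y \<longleftrightarrow> (\<forall>j < length q. q ! j \<le> y)"
  using all_set_conv_all_nth[of q "\<lambda>x. x \<le> y"] by (simp add: max_letter_def)

lemma max_letter_eq_0_iff: "q \<noteq> [] \<Longrightarrow> max_letter q = 0 \<longleftrightarrow> (\<forall>x \<in> set q. x = 0)"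
  using Max_le_iff[of "set q" 0] by (simp add: max_letter_def)

text \<open>The initial 0 of an ascent sequence serves as the 0 of a pattern 021 ending in a positive letter.\<close>

lemma no_021_ending_iff:
  assumes "ascent_seq q"
  shows "\<not> (\<exists>i j. i < j \<and> j < length q \<and> q ! i < y \<and> y < q ! j) \<longleftrightarrow> y = 0 \<or> max_letter q \<le> y"
proof
  assume no_pattern: "\<not> (\<exists>i j. i < j \<and> j < length q \<and> q ! i < y \<and> y < q ! j)"
  have "q ! j \<le> y" if "y \<noteq> 0" "j < length q" for j
  proof (rule ccontr)
    assume "\<not> q ! j \<le> y"
    moreover have "q ! 0 = 0" using assms by (simp add: ascent_seq_def)
    ultimately show False using no_pattern that by (metis gr0I not_le not_less0)
  qed
  then show "y = 0 \<or> max_letter q \<le> y"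
    using assms by (auto simp: max_letter_le_iff ascent_seq_def)
next
  assume "y = 0 \<or> max_letter q \<le> y"
  then show "\<not> (\<exists>i j. i < j \<and> j < length q \<and> q ! i < y \<and> y < q ! j)"
    using assms by (auto simp: max_letter_le_iff ascent_seq_def not_less)
qed

definition appendable :: "nat list \<Rightarrow> nat set" where
  "appendable q = {y. y = 0 \<or> (max_letter q \<le> y \<and> y \<le> asc q + 1)}"

lemma finite_appendable: "finite (appendable q)"
  by (rule finite_subset[of _ "{..asc q + 1}"]) (auto simp: appendable_def)

lemma AS021_0: "AS021 0 = {}"
  by (simp add: AS021_def ascent_seq_def)

lemma AS021_1: "AS021 (Suc 0) = {[0]}"
  by (auto simp: AS021_def ascent_seq_def avoids021_def length_Suc_conv)

lemma AS021_nonempty: "p \<in> AS021 n \<Longrightarrow> p \<noteq> []"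
  by (simp add: AS021_def ascent_seq_def)

lemma AS021_Suc:
  assumes "n \<ge> 1"
  shows "AS021 (Suc n) = (\<lambda>(q, y). q @ [y]) ` (SIGMA q : AS021 n. appendable q)"
proof (rule set_eqI)
  fix p
  have iff: "q @ [y] \<in> AS021 (Suc n) \<longleftrightarrow> q \<in> AS021 n \<and> y \<in> appendable q" if "length q = n" for q y
  proof -
    have "q \<noteq> []" using that assms by auto
    then show ?thesis
      using that no_021_ending_iff[of q y]
      by (auto simp: AS021_def appendable_def ascent_seq_snoc avoids021_snoc)
  qed
  show "p \<in> AS021 (Suc n) \<longleftrightarrow> p \<in> (\<lambda>(q, y). q @ [y]) ` (SIGMA q : AS021 n. appendable q)"
  proof
    assume p: "p \<in> AS021 (Suc n)"
    then obtain q y where "p = q @ [y]" by (metis AS021_nonempty rev_exhaust)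
    moreover have "length q = n" using p calculation by (simp add: AS021_def)
    ultimately show "p \<in> (\<lambda>(q, y). q @ [y]) ` (SIGMA q : AS021 n. appendable q)"
      using p iff by auto
  qed (use iff in \<open>auto simp: AS021_def\<close>)
qed

lemma AS021_induct [consumes 1, case_names single snoc]:
  assumes "p \<in> AS021 n"
    and single: "P [0]"
    and snoc: "\<And>n q y. n \<ge> 1 \<Longrightarrow> q \<in> AS021 n \<Longrightarrow> P q \<Longrightarrow> y \<in> appendable q \<Longrightarrow> P (q @ [y])"
  shows "P p"
  using assms(1)
proof (induction n arbitrary: p)
  case 0
  then show ?case by (simp add: AS021_0)
next
  case (Suc n)
  show ?case
  proof (cases "n = 0")
    case True
    then show ?thesis using Suc.prems single AS021_1 by auto
  next
    case False
    then obtain q y where "p = q @ [y]" "q \<in> AS021 n" "y \<in> appendable q"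
      using Suc.prems AS021_Suc[of n] by auto
    then show ?thesis using False Suc.IH snoc[of n q y] by simp
  qed
qed

lemma finite_AS021: "finite (AS021 n)"
proof (induction n)
  case (Suc n)
  then show ?case
    by (cases "n = 0") (simp_all add: AS021_1 AS021_Suc finite_appendable)
qed (simp add: AS021_0)

lemma sum_AS021_Suc:
  assumes "n \<ge> 1"
  shows "(\<Sum>p\<in>AS021 (Suc n). g p) = (\<Sum>q\<in>AS021 n. \<Sum>y\<in>appendable q. g (q @ [y]))"
proof -
  have "inj_on (\<lambda>(q, y). q @ [y]) (SIGMA q : AS021 n. appendable q)"
    by (auto simp: inj_on_def)
  then show ?thesis
    unfolding AS021_Suc[OF assms]
    by (simp add: sum.reindex sum.Sigma finite_AS021 finite_appendable split_def)
qed

lemma AS021_max_letter_le_asc_and_last: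
  "p \<in> AS021 n \<Longrightarrow> max_letter p \<le> asc p \<and> (last p = 0 \<or> last p = max_letter p)"
proof (induction rule: AS021_induct)
  case single
  then show ?case by (simp add: max_letter_def asc_eq_0_if_all_zero)
next
  case (snoc n q y)
  have "q \<noteq> []" using snoc.hyps AS021_nonempty by blast
  moreover have "last q \<le> max_letter q" using \<open>q \<noteq> []\<close> by (simp add: max_letter_ge)
  ultimately show ?case using snoc by (auto simp: appendable_def max_letter_snoc asc_snoc)
qed

section \<open>Weights by ending and slack\<close>

text \<open>By AS021_max_letter_le_asc_and_last, a sequence of kind At_Max ends with its maximum.\<close>

datatype ending_kind = Zeros | At_Max | At_Zero

definition ending :: "nat list \<Rightarrow> ending_kind" where
  "ending p = (if max_letter p = 0 then Zeros else if last p = 0 then At_Zero else At_Max)"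

definition slack :: "nat list \<Rightarrow> nat" where
  "slack p = asc p - max_letter p"

definition weight :: "real \<Rightarrow> real \<Rightarrow> nat list \<Rightarrow> real" where
  "weight v w p = v ^ max_letter p * w ^ asc p"

lemma snoc_above_max:
  assumes "q \<noteq> []" "max_letter q < y"
  shows "ending (q @ [y]) = At_Max" "slack (q @ [y]) = asc q + 1 - y"
    "weight v w (q @ [y]) = w * v ^ (y - max_letter q) * weight v w q"
proof -
  have "last q < y" using assms max_letter_ge[of "last q" q] by simp
  moreover have "v ^ y = v ^ max_letter q * v ^ (y - max_letter q)"
    using assms by (simp flip: power_add)
  ultimately show "ending (q @ [y]) = At_Max" "slack (q @ [y]) = asc q + 1 - y"
    "weight v w (q @ [y]) = w * v ^ (y - max_letter q) * weight v w q"
    using assms by (simp_all add: ending_def slack_def weight_def max_letter_snoc asc_snoc)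
qed

lemma sum_greaterThanAtMost_reindex:
  fixes g :: "nat \<Rightarrow> real"
  assumes "M \<le> a"
  shows "(\<Sum>y\<in>{M<..a + 1}. g y) = (\<Sum>j\<le>a - M. g (M + Suc j))"
  by (rule sum.reindex_bij_witness[of _ "\<lambda>j. M + Suc j" "\<lambda>y. y - Suc M"]) (use assms in auto)

text \<open>The three summands come from appending 0, max q and a letter in (max q, asc q + 1];
  a constantly 0 sequence takes 0 or 1.\<close>

lemma sum_appendable:
  fixes G :: "ending_kind \<Rightarrow> nat \<Rightarrow> real"
  assumes q: "q \<in> AS021 n"
  shows "(\<Sum>y\<in>appendable q. G (ending (q @ [y])) (slack (q @ [y])) * weight v w (q @ [y])) =
    (case ending q of
       Zeros \<Rightarrow> G Zeros 0 + v * w * G At_Max 0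
     | At_Max \<Rightarrow> G At_Zero (slack q) + G At_Max (slack q)
         + v * w * (\<Sum>j\<le>slack q. v ^ j * G At_Max (slack q - j))
     | At_Zero \<Rightarrow> G At_Zero (slack q) + w * G At_Max (slack q + 1)
         + v * w * (\<Sum>j\<le>slack q. v ^ j * G At_Max (slack q - j))) * weight v w q"
proof -
  define M a where "M = max_letter q" and "a = asc q"
  have qne: "q \<noteq> []" using q AS021_nonempty by blast
  have Ma: "M \<le> a" and last: "last q = 0 \<or> last q = M"
    using AS021_max_letter_le_asc_and_last[OF q] unfolding M_def a_def by auto
  have last_le: "last q \<le> M" unfolding M_def using qne by (simp add: max_letter_ge)
  note snoc = max_letter_snoc[OF qne] asc_snoc[OF qne]
  show ?thesis
  proof (cases "M = 0")
    case True
    then have "a = 0" "last q = 0"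
      using asc_eq_0_if_all_zero[of q] max_letter_eq_0_iff[OF qne] last_le unfolding M_def a_def by auto
    moreover have "appendable q = {0, 1}" using True calculation
      unfolding appendable_def M_def a_def by auto
    ultimately show ?thesis using True snoc unfolding M_def a_def
      by (simp add: ending_def slack_def weight_def)
  next
    case False
    have app: "appendable q = insert 0 (insert M {M<..a + 1})"
      using False Ma unfolding appendable_def M_def a_def by auto
    have at_0: "G (ending (q @ [0])) (slack (q @ [0])) * weight v w (q @ [0])
        = G At_Zero (slack q) * weight v w q"
      using False snoc unfolding M_def by (simp add: ending_def slack_def weight_def)
    have at_M: "G (ending (q @ [M])) (slack (q @ [M])) * weight v w (q @ [M]) =
        (if ending q = At_Max then G At_Max (slack q) else w * G At_Max (slack q + 1)) * weight v w q"
      using False last Ma snoc unfolding M_def a_def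
      by (auto simp: ending_def slack_def weight_def Suc_diff_le)
    have above_M: "G (ending (q @ [y])) (slack (q @ [y])) * weight v w (q @ [y]) =
        w * (v ^ (y - M) * G At_Max (a + 1 - y)) * weight v w q" if "y \<in> {M<..a + 1}" for y
      using that snoc_above_max[OF qne, of y] unfolding M_def a_def by simp
    have "(\<Sum>y\<in>{M<..a + 1}. w * (v ^ (y - M) * G At_Max (a + 1 - y)) * weight v w q)
        = v * w * (\<Sum>j\<le>slack q. v ^ j * G At_Max (slack q - j)) * weight v w q"
      unfolding sum_greaterThanAtMost_reindex[OF Ma] slack_def M_def[symmetric] a_def[symmetric]
      by (simp add: sum_distrib_left sum_distrib_right algebra_simps Suc_diff_le)
    then show ?thesis
      using False last app at_0 at_M above_M unfolding M_def
      by (auto simp: ending_def algebra_simps)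
  qed
qed

definition class_weight :: "real \<Rightarrow> real \<Rightarrow> nat \<Rightarrow> ending_kind \<Rightarrow> nat \<Rightarrow> real" where
  "class_weight v w n e s = (\<Sum>p\<in>AS021 n. of_bool (ending p = e \<and> slack p = s) * weight v w p)"

lemma slack_less: "p \<in> AS021 n \<Longrightarrow> slack p < n"
  using asc_less_length[of p] AS021_nonempty[of p n] unfolding slack_def AS021_def by auto

lemma slack_Zeros: "p \<in> AS021 n \<Longrightarrow> ending p = Zeros \<Longrightarrow> slack p = 0"
  using asc_eq_0_if_all_zero[of p] max_letter_eq_0_iff[of p] AS021_nonempty[of p n]
  by (auto simp: slack_def ending_def split: if_splits)

lemma sum_power_of_bool_diff:
  "(\<Sum>j\<le>k. v ^ j * of_bool (k - j = s)) = (if s \<le> k then v ^ (k - s) else (0 :: real))"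
proof -
  have "{..k} \<inter> {j. k - j = s} = (if s \<le> k then {k - s} else {})" by auto
  then show ?thesis by simp
qed

lemma sum_power_of_bool_add:
  "k \<le> n \<Longrightarrow> (\<Sum>j\<le>n. v ^ j * of_bool (k = s + j)) = (if s \<le> k then v ^ (k - s) else (0 :: real))"
proof -
  assume "k \<le> n"
  then have "{..n} \<inter> {j. k = s + j} = (if s \<le> k then {k - s} else {})" by auto
  then show ?thesis by simp
qed

lemma class_weight_Suc:
  assumes "n \<ge> 1"
  shows "class_weight v w (Suc n) e s = (\<Sum>q\<in>AS021 n. \<Sum>y\<in>appendable q.
    of_bool (ending (q @ [y]) = e \<and> slack (q @ [y]) = s) * weight v w (q @ [y]))"
  unfolding class_weight_def sum_AS021_Suc[OF assms] ..

lemma class_weight_Suc_Zeros: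
  assumes "n \<ge> 1"
  shows "class_weight v w (Suc n) Zeros s = class_weight v w n Zeros s"
  unfolding class_weight_Suc[OF assms] unfolding class_weight_def
proof (rule sum.cong[OF refl])
  fix q assume q: "q \<in> AS021 n"
  show "(\<Sum>y\<in>appendable q. of_bool (ending (q @ [y]) = Zeros \<and> slack (q @ [y]) = s) * weight v w (q @ [y]))
      = of_bool (ending q = Zeros \<and> slack q = s) * weight v w q"
    using sum_appendable[OF q, of "\<lambda>e s'. of_bool (e = Zeros \<and> s' = s)" v w] slack_Zeros[OF q]
    by (cases "ending q") auto
qed

lemma class_weight_Zeros:
  assumes "n \<ge> 1"
  shows "class_weight v w n Zeros s = of_bool (s = 0)"
  using assms
proof (induction n rule: dec_induct)
  case base
  then show ?case
    by (simp add: class_weight_def AS021_1 ending_def slack_def weight_def max_letter_def asc_def)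
next
  case (step n)
  then show ?case by (simp add: class_weight_Suc_Zeros)
qed

lemma class_weight_Suc_At_Zero:
  assumes "n \<ge> 1"
  shows "class_weight v w (Suc n) At_Zero s = class_weight v w n At_Max s + class_weight v w n At_Zero s"
  unfolding class_weight_Suc[OF assms] unfolding class_weight_def sum.distrib[symmetric]
proof (rule sum.cong[OF refl])
  fix q assume q: "q \<in> AS021 n"
  show "(\<Sum>y\<in>appendable q. of_bool (ending (q @ [y]) = At_Zero \<and> slack (q @ [y]) = s) * weight v w (q @ [y]))
      = of_bool (ending q = At_Max \<and> slack q = s) * weight v w q
        + of_bool (ending q = At_Zero \<and> slack q = s) * weight v w q"
    using sum_appendable[OF q, of "\<lambda>e s'. of_bool (e = At_Zero \<and> s' = s)" v w]
    by (cases "ending q") auto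
qed

lemma class_weight_Suc_At_Max:
  assumes "n \<ge> 1"
  shows "class_weight v w (Suc n) At_Max s = class_weight v w n At_Max s
     + (if s = 0 then v * w * class_weight v w n Zeros 0 else w * class_weight v w n At_Zero (s - 1))
     + v * w * (\<Sum>j\<le>n. v ^ j * (class_weight v w n At_Max (s + j) + class_weight v w n At_Zero (s + j)))"
proof -
  define cls :: "ending_kind \<Rightarrow> nat \<Rightarrow> nat list \<Rightarrow> real"
    where "cls e k q = of_bool (ending q = e \<and> slack q = k)" for e k q
  have "class_weight v w (Suc n) At_Max s = (\<Sum>q\<in>AS021 n. (cls At_Max s q
      + (if s = 0 then v * w * cls Zeros 0 q else w * cls At_Zero (s - 1) q)
      + v * w * (\<Sum>j\<le>n. v ^ j * (cls At_Max (s + j) q + cls At_Zero (s + j) q))) * weight v w q)"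
    unfolding class_weight_Suc[OF assms]
  proof (rule sum.cong[OF refl])
    fix q assume q: "q \<in> AS021 n"
    have "slack q \<le> n" using slack_less[OF q] by simp
    show "(\<Sum>y\<in>appendable q. of_bool (ending (q @ [y]) = At_Max \<and> slack (q @ [y]) = s) * weight v w (q @ [y]))
      = (cls At_Max s q + (if s = 0 then v * w * cls Zeros 0 q else w * cls At_Zero (s - 1) q)
      + v * w * (\<Sum>j\<le>n. v ^ j * (cls At_Max (s + j) q + cls At_Zero (s + j) q))) * weight v w q"
      using sum_appendable[OF q, of "\<lambda>e s'. of_bool (e = At_Max \<and> s' = s)" v w] slack_Zeros[OF q]
      unfolding cls_def sum.distrib distrib_left
      by (cases "ending q") (auto simp: sum_power_of_bool_diff sum_power_of_bool_add \<open>slack q \<le> n\<close>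
        Suc_diff_le simp del: sum_mult_of_bool_eq)
  qed
  also have "\<dots> = class_weight v w n At_Max s
     + (if s = 0 then v * w * class_weight v w n Zeros 0 else w * class_weight v w n At_Zero (s - 1))
     + v * w * (\<Sum>j\<le>n. v ^ j * (class_weight v w n At_Max (s + j) + class_weight v w n At_Zero (s + j)))"
    unfolding class_weight_def cls_def[symmetric]
    by (simp add: sum.distrib sum_distrib_left sum_distrib_right sum.swap[of _ "{..n}"] algebra_simps)
  finally show ?thesis .
qed

lemma sum_weight_eq_class_weights:
  "(\<Sum>p\<in>AS021 n. weight v w p) = class_weight v w n Zeros 0
     + (\<Sum>s\<le>n. class_weight v w n At_Max s + class_weight v w n At_Zero s)"
proof -
  have per_seq: "weight v w p = (of_bool (ending p = Zeros \<and> slack p = 0)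
      + (\<Sum>s\<le>n. of_bool (ending p = At_Max \<and> slack p = s) + of_bool (ending p = At_Zero \<and> slack p = s)))
      * weight v w p" if p: "p \<in> AS021 n" for p
  proof -
    have "{..n} \<inter> {s. slack p = s} = {slack p}" using slack_less[OF p] by auto
    then show ?thesis using slack_Zeros[OF p] by (cases "ending p") (simp_all add: sum.distrib)
  qed
  then have "(\<Sum>p\<in>AS021 n. weight v w p) = (\<Sum>p\<in>AS021 n. (of_bool (ending p = Zeros \<and> slack p = 0)
      + (\<Sum>s\<le>n. of_bool (ending p = At_Max \<and> slack p = s) + of_bool (ending p = At_Zero \<and> slack p = s)))
      * weight v w p)"
    by (rule sum.cong[OF refl])
  also have "\<dots> = class_weight v w n Zeros 0
     + (\<Sum>s\<le>n. class_weight v w n At_Max s + class_weight v w n At_Zero s)"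
    unfolding class_weight_def
    by (simp add: sum.distrib sum_distrib_left sum_distrib_right sum.swap[of _ "{..n}"] algebra_simps
        del: sum_of_bool_eq sum_of_bool_mult_eq sum_mult_of_bool_eq)
  finally show ?thesis .
qed

section \<open>Generating functions\<close>

lemma fps_eq_fps_X_mult_shift:
  fixes r :: "'a :: comm_ring_1 fps"
  shows "r $ 0 = 0 \<Longrightarrow> r = fps_X * fps_shift 1 r"
proof (intro fps_ext)
  fix n
  show "r $ 0 = 0 \<Longrightarrow> r $ n = (fps_X * fps_shift 1 r) $ n" by (cases n) simp_all
qed

lemma fps_nth_mult_inverse_one_minus:
  fixes G r :: "'a :: field fps"
  assumes r0: "r $ 0 = 0"
  shows "(G * inverse (1 - r)) $ n = (\<Sum>j\<le>n. (G * r ^ j) $ n)"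
proof -
  define K where "K = inverse (1 - r)"
  define S where "S = (\<Sum>j\<le>n. r ^ j)"
  have K1: "K * (1 - r) = 1" unfolding K_def by (rule inverse_mult_eq_1) (simp add: r0)
  have "K = K * ((1 - r) * S + r ^ Suc n)"
    unfolding S_def sum_gp_basic by simp
  also have "\<dots> = (K * (1 - r)) * S + r ^ Suc n * K"
    by (simp add: algebra_simps)
  finally have K: "K = S + r ^ Suc n * K" unfolding K1 by simp
  have "r ^ Suc n = fps_X ^ Suc n * fps_shift 1 r ^ Suc n"
    by (subst fps_eq_fps_X_mult_shift[OF r0]) (simp only: power_mult_distrib)
  then have "G * (r ^ Suc n * K) = fps_X ^ Suc n * (G * fps_shift 1 r ^ Suc n * K)"
    by (simp only: ac_simps)
  then have "(G * (r ^ Suc n * K)) $ n = 0"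
    by (simp only: fps_X_power_mult_nth) simp
  then have "(G * K) $ n = (G * S) $ n"
    by (subst K) (simp add: distrib_left)
  then show ?thesis unfolding K_def S_def by (simp add: sum_distrib_left fps_sum_nth)
qed

definition zeros_gf :: "real fps" where
  "zeros_gf = Abs_fps (\<lambda>n. if n = 0 then 0 else 1)"

lemma zeros_gf_eq: "zeros_gf = fps_X * (1 + zeros_gf)"
  unfolding zeros_gf_def by (intro fps_ext) simp

lemma zeros_gf_inverse: "(1 + zeros_gf) * (1 - fps_X) = 1"
  using zeros_gf_eq by (simp add: algebra_simps)

definition ratio_gf :: "real \<Rightarrow> real \<Rightarrow> real fps" where
  "ratio_gf v w = fps_const w * zeros_gf * hgen (v * w)"

definition at_max_gf :: "real \<Rightarrow> real \<Rightarrow> nat \<Rightarrow> real fps" where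
  "at_max_gf v w s = fps_const (v * w) * zeros_gf * hgen (v * w) * ratio_gf v w ^ s"

lemma ratio_gf_nth_0: "ratio_gf v w $ 0 = 0"
  by (simp add: ratio_gf_def zeros_gf_def)

lemma hgen_kernel_eq:
  "hgen (v * w) = fps_X * (hgen (v * w) + 1
     + fps_const (v * w) * (1 + zeros_gf) * hgen (v * w) * inverse (1 - fps_const v * ratio_gf v w))"
proof -
  define H I c where "H = hgen (v * w)" and "I = inverse (1 - fps_const v * ratio_gf v w)"
    and "c = fps_const (v * w)"
  have "fps_const v * ratio_gf v w = c * zeros_gf * H"
    unfolding c_def H_def ratio_gf_def by (simp add: ac_simps flip: fps_const_mult)
  moreover have "I * (1 - fps_const v * ratio_gf v w) = 1"
    unfolding I_def by (rule inverse_mult_eq_1) (simp add: ratio_gf_nth_0)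
  ultimately have I: "I * (1 - c * zeros_gf * H) = 1" by simp
  have "H = fps_X * (1 + H) * (1 + c * H)"
    unfolding H_def c_def by (rule hgen_functional_eq)
  then show ?thesis
    using I zeros_gf_eq zeros_gf_inverse unfolding H_def[symmetric] I_def[symmetric] c_def[symmetric]
    by algebra
qed

lemma at_max_gf_eq:
  "at_max_gf v w s = fps_X * (at_max_gf v w s
     + (if s = 0 then fps_const (v * w) * zeros_gf else fps_const w * zeros_gf * at_max_gf v w (s - 1))
     + fps_const (v * w) * (1 + zeros_gf) * at_max_gf v w s * inverse (1 - fps_const v * ratio_gf v w))"
proof (cases s)
  case 0
  show ?thesis
    unfolding 0 at_max_gf_def using hgen_kernel_eq[of v w] by simp algebra
next
  case (Suc s')
  define T q I where "T = at_max_gf v w s'" and "q = ratio_gf v w"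
    and "I = inverse (1 - fps_const v * q)"
  have q: "q = fps_const w * zeros_gf * hgen (v * w)" unfolding q_def ratio_gf_def ..
  have "T * q = fps_X * (T * q + fps_const w * zeros_gf * T
      + fps_const (v * w) * (1 + zeros_gf) * (T * q) * I)"
    using hgen_kernel_eq[of v w] q unfolding I_def q_def[symmetric] by algebra
  moreover have "at_max_gf v w s = T * q" unfolding T_def q_def at_max_gf_def Suc by simp
  ultimately show ?thesis unfolding I_def T_def q_def by (simp add: Suc)
qed

lemma at_max_gf_eq_fps_X_power:
  "at_max_gf v w s =
     fps_X ^ 2 * (fps_const (v * w) * (1 + zeros_gf) * fps_shift 1 (hgen (v * w)) * ratio_gf v w ^ s)"
proof -
  have H: "fps_X * fps_shift 1 (hgen (v * w)) = hgen (v * w)"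
    by (rule fps_eq_fps_X_mult_shift[symmetric]) (simp add: hgen_def)
  have "at_max_gf v w s = fps_const (v * w) * (fps_X * (1 + zeros_gf))
      * (fps_X * fps_shift 1 (hgen (v * w))) * ratio_gf v w ^ s"
    unfolding at_max_gf_def by (simp only: H zeros_gf_eq[symmetric])
  then show ?thesis by (simp add: ac_simps power2_eq_square)
qed

lemma at_max_gf_nth_less_2:
  assumes "n < 2"
  shows "at_max_gf v w s $ n = 0" "(zeros_gf * at_max_gf v w s) $ n = 0"
proof -
  define R where "R = fps_const (v * w) * (1 + zeros_gf) * fps_shift 1 (hgen (v * w)) * ratio_gf v w ^ s"
  have T: "at_max_gf v w s = fps_X ^ 2 * R"
    unfolding R_def by (rule at_max_gf_eq_fps_X_power)
  then show "at_max_gf v w s $ n = 0"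
    using assms by (simp add: fps_X_power_mult_nth)
  have YT: "zeros_gf * at_max_gf v w s = fps_X ^ 2 * (zeros_gf * R)"
    unfolding T by (rule mult.left_commute)
  show "(zeros_gf * at_max_gf v w s) $ n = 0"
    unfolding YT fps_X_power_mult_nth using assms by simp
qed

lemma at_max_gf_geometric_nth:
  "((1 + zeros_gf) * at_max_gf v w s * inverse (1 - fps_const v * ratio_gf v w)) $ n
     = (\<Sum>j\<le>n. v ^ j * (at_max_gf v w (s + j) $ n + (zeros_gf * at_max_gf v w (s + j)) $ n))"
proof -
  have "((1 + zeros_gf) * at_max_gf v w s * (fps_const v * ratio_gf v w) ^ j) =
      fps_const (v ^ j) * (at_max_gf v w (s + j) + zeros_gf * at_max_gf v w (s + j))" for j
    unfolding at_max_gf_def by (simp add: power_mult_distrib power_add algebra_simps)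
  then show ?thesis
    by (simp add: fps_nth_mult_inverse_one_minus ratio_gf_nth_0)
qed

lemma class_weight_eq_at_max_gf:
  assumes "n \<ge> 1"
  shows "class_weight v w n At_Max s = at_max_gf v w s $ n
    \<and> class_weight v w n At_Zero s = (zeros_gf * at_max_gf v w s) $ n"
  using assms
proof (induction n arbitrary: s rule: dec_induct)
  case base
  then show ?case
    by (simp add: class_weight_def AS021_1 ending_def max_letter_def at_max_gf_nth_less_2)
next
  case (step n)
  have Y: "zeros_gf $ n = 1" using step.hyps by (simp add: zeros_gf_def)
  have rec_max: "at_max_gf v w s $ Suc n = at_max_gf v w s $ n
      + (if s = 0 then v * w * zeros_gf $ n else w * (zeros_gf * at_max_gf v w (s - 1)) $ n)
      + v * w * (\<Sum>j\<le>n. v ^ j * (at_max_gf v w (s + j) $ n + (zeros_gf * at_max_gf v w (s + j)) $ n))"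
    by (subst at_max_gf_eq)
      (simp add: at_max_gf_geometric_nth[symmetric] mult.assoc del: fps_const_mult)
  have YT: "zeros_gf * at_max_gf v w s = fps_X * (at_max_gf v w s + zeros_gf * at_max_gf v w s)"
    by (subst (1) zeros_gf_eq) (simp add: algebra_simps)
  have rec_zero: "(zeros_gf * at_max_gf v w s) $ Suc n
      = at_max_gf v w s $ n + (zeros_gf * at_max_gf v w s) $ n"
    by (subst YT) simp
  show ?case
    using rec_max rec_zero step.IH step.hyps
    by (simp add: class_weight_Suc_At_Max class_weight_Suc_At_Zero class_weight_Zeros Y)
qed

lemma fgen_eq:
  "fgen v w = zeros_gf + (1 + zeros_gf) * at_max_gf v w 0 * inverse (1 - ratio_gf v w)"
proof (rule fps_ext)
  fix n
  show "fgen v w $ n = (zeros_gf + (1 + zeros_gf) * at_max_gf v w 0 * inverse (1 - ratio_gf v w)) $ n"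
  proof (cases "n = 0")
    case True
    then show ?thesis by (simp add: fgen_def AS021_0 zeros_gf_def at_max_gf_def)
  next
    case False
    have "(1 + zeros_gf) * at_max_gf v w 0 * ratio_gf v w ^ s
        = at_max_gf v w s + zeros_gf * at_max_gf v w s" for s
      unfolding at_max_gf_def by (simp add: algebra_simps)
    then have "((1 + zeros_gf) * at_max_gf v w 0 * inverse (1 - ratio_gf v w)) $ n
        = (\<Sum>s\<le>n. at_max_gf v w s $ n + (zeros_gf * at_max_gf v w s) $ n)"
      by (simp add: fps_nth_mult_inverse_one_minus ratio_gf_nth_0)
    moreover have "fgen v w $ n = (\<Sum>p\<in>AS021 n. weight v w p)"
      by (simp add: fgen_def weight_def max_letter_def)
    ultimately show ?thesis
      using False class_weight_eq_at_max_gf[of n v w]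
      by (simp add: sum_weight_eq_class_weights class_weight_Zeros zeros_gf_def)
  qed
qed

lemma fgen_mult_denom: "fgen v w * denom v w = numer v w"
proof -
  define V W H J where "V = fps_const v" and "W = fps_const w" and "H = hgen (v * w)"
    and "J = inverse (1 - ratio_gf v w)"
  have J: "J * (1 - W * zeros_gf * H) = 1"
    unfolding J_def W_def H_def ratio_gf_def by (rule inverse_mult_eq_1) (simp add: zeros_gf_def)
  have f: "fgen v w = zeros_gf + (1 + zeros_gf) * (V * W * zeros_gf * H) * J"
    unfolding fgen_eq J_def at_max_gf_def V_def W_def H_def by simp
  have quadratic: "H = fps_X * (1 + H) * (1 + V * W * H)"
    using hgen_functional_eq[of "v * w"] unfolding V_def W_def H_def by simp
  have n: "numer v w = fps_X * (1 - V) * ((1 - fps_X)^2 - W * fps_X^2) - V^2 * W * fps_X * (1 - fps_X) * H"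
    unfolding numer_def V_def W_def H_def
    by (simp add: fps_const_power fps_const_sub[symmetric] algebra_simps)
  have d: "denom v w = (1 - fps_X) * ((1 - V) * ((1 - fps_X)^2 - W * fps_X^2) - V * W * fps_X)"
    unfolding denom_def V_def W_def by (simp add: fps_const_sub[symmetric] algebra_simps)
  show ?thesis unfolding f n d using J zeros_gf_inverse zeros_gf_eq quadratic by algebra
qed

lemma fgen_1: "fgen 1 w = hgen w"
proof -
  define W H J where "W = fps_const w" and "H = hgen w" and "J = inverse (1 - ratio_gf 1 w)"
  have J: "J * (1 - W * zeros_gf * H) = 1"
    unfolding J_def W_def H_def ratio_gf_def mult_1 by (rule inverse_mult_eq_1) (simp add: zeros_gf_def)
  have f: "fgen 1 w = zeros_gf + (1 + zeros_gf) * (W * zeros_gf * H) * J"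
    unfolding fgen_eq J_def at_max_gf_def W_def H_def by simp
  have quadratic: "H = fps_X * (1 + H) * (1 + W * H)"
    using hgen_functional_eq[of w] unfolding W_def H_def by simp
  show ?thesis unfolding f H_def[symmetric] using J zeros_gf_inverse zeros_gf_eq quadratic by algebra
qed

lemma card_AS021_asc:
  assumes "n \<ge> 1"
  shows "real (card {p \<in> AS021 n. asc p = m}) = narayana n (m + 1)"
proof -
  define P Q where "P = (\<Sum>k<n. monom (real (card {p \<in> AS021 n. asc p = k})) k)"
    and "Q = (\<Sum>k<n. monom (narayana n (k + 1)) k)"
  have asc_less: "asc p < n" if "p \<in> AS021 n" for p
    using that asc_less_length AS021_nonempty by (fastforce simp: AS021_def)
  have "poly P x = poly Q x" for x
  proof -
    have "poly P x = (\<Sum>k<n. \<Sum>p\<in>{p \<in> AS021 n. asc p = k}. x ^ asc p)"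
      unfolding P_def by (simp add: poly_sum poly_monom)
    also have "\<dots> = (\<Sum>p\<in>AS021 n. x ^ asc p)"
      by (rule sum.group) (use finite_AS021 asc_less in auto)
    also have "\<dots> = hgen x $ n" by (simp flip: fgen_1 add: fgen_def)
    also have "\<dots> = poly Q x" unfolding Q_def hgen_def by (simp add: poly_sum poly_monom)
    finally show ?thesis .
  qed
  then have "P = Q" using poly_eq_poly_eq_iff by blast
  show ?thesis
  proof (cases "m < n")
    case True
    then show ?thesis
      using arg_cong[OF \<open>P = Q\<close>, of "\<lambda>p. coeff p m"] unfolding P_def Q_def coeff_sum coeff_monom
      by simp
  next
    case False
    then have "{p \<in> AS021 n. asc p = m} = {}" using asc_less by fastforce
    then show ?thesis using False by (simp only: card.empty) (simp add: narayana_def binomial_eq_0)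
  qed
qed

theorem theorem2:
  shows "(\<forall>v w :: real. denom v w \<noteq> 0 \<longrightarrow> fgen v w = numer v w / denom v w)
    \<and> (\<forall>w :: real. fgen 1 w = hgen w)
    \<and> (\<forall>n m. n \<ge> 1 \<longrightarrow>
         real (card {p \<in> AS021 n. asc p = m}) = narayana n (m + 1))"
proof (intro conjI allI impI)
  fix v w :: real
  assume "denom v w \<noteq> 0"
  then show "fgen v w = numer v w / denom v w"
    using fps_divide_times_eq fgen_mult_denom by metis
qed (simp_all add: fgen_1 card_AS021_asc)

end
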